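(* Assume CH. Then there is no separable regular Baire $\sigma$-space $X$ with $dis(X)<\Delta(X)$.
   Context: All spaces are Hausdorff. CH is the Continuum Hypothesis $2^{\aleph_0}=\aleph_1$. $dis(X)$ is the least number of discrete subspaces needed to cover $X$; $\Delta(X)$ is the least cardinality of a non-empty open subset of $X$. A $\sigma$-space is a space having a $\sigma$-discrete network (a network being a family $\mathcal{N}$ of subsets such that for every open $U$ and $x\in U$ there is $N\in\mathcal{N}$ with $x\in N\subseteq U$). *)

theory Defs
  imports "HOL-Analysis.Analysis"
begin

unbundle cardinal_syntax

definition CH :: bool where
  "CH \<longleftrightarrow> |Pow (UNIV :: nat set)| =o cardSuc |UNIV :: nat set|"

definition discrete_subspace :: "'a topology \<Rightarrow> 'a set \<Rightarrow> bool" where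
  "discrete_subspace X D \<longleftrightarrow> D \<subseteq> topspace X \<and> subtopology X D = discrete_topology D"

definition Baire_space :: "'a topology \<Rightarrow> bool" where
  "Baire_space X \<longleftrightarrow>
     (\<forall>\<U>. countable \<U> \<and> (\<forall>U\<in>\<U>. openin X U \<and> X closure_of U = topspace X)
        \<longrightarrow> X closure_of (topspace X \<inter> \<Inter>\<U>) = topspace X)"

definition network :: "'a topology \<Rightarrow> 'a set set \<Rightarrow> bool" where
  "network X \<N> \<longleftrightarrow> (\<forall>N\<in>\<N>. N \<subseteq> topspace X) \<and>
     (\<forall>U x. openin X U \<and> x \<in> U \<longrightarrow> (\<exists>N\<in>\<N>. x \<in> N \<and> N \<subseteq> U))"

definition discrete_family :: "'a topology \<Rightarrow> 'a set set \<Rightarrow> bool" where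
  "discrete_family X \<A> \<longleftrightarrow>
     (\<forall>x\<in>topspace X. \<exists>U. openin X U \<and> x \<in> U \<and>
        (\<forall>A\<in>\<A>. \<forall>B\<in>\<A>. A \<inter> U \<noteq> {} \<and> B \<inter> U \<noteq> {} \<longrightarrow> A = B))"

definition sigma_discrete :: "'a topology \<Rightarrow> 'a set set \<Rightarrow> bool" where
  "sigma_discrete X \<N> \<longleftrightarrow> (\<exists>F :: nat \<Rightarrow> 'a set set. \<N> = (\<Union>n. F n) \<and> (\<forall>n. discrete_family X (F n)))"

definition sigma_space :: "'a topology \<Rightarrow> bool" where
  "sigma_space X \<longleftrightarrow> (\<exists>\<N>. network X \<N> \<and> sigma_discrete X \<N>)"

text \<open>dis(X) < Delta(X), for a nonempty space X (so that Delta(X) is defined):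
  there is a cover of X by discrete subspaces whose number is strictly smaller than the
  cardinality of every nonempty open subset (Delta(X) being the minimum of these cardinalities).\<close>
definition dis_less_Delta :: "'a topology \<Rightarrow> bool" where
  "dis_less_Delta X \<longleftrightarrow> topspace X \<noteq> {} \<and>
     (\<exists>\<D>. (\<forall>D\<in>\<D>. discrete_subspace X D) \<and> \<Union>\<D> = topspace X \<and>
        (\<forall>U. openin X U \<and> U \<noteq> {} \<longrightarrow> card_of \<D> <o card_of U))"

end

theory Submission
  imports Defs
begin

(*
  Let D be a cover of X by discrete subspaces with |D| < |U| for every nonempty open U.
  (1) X has no isolated points: an open singleton U would force |D| < 1.
  (2) Hence every discrete subspace is nowhere dense, so by the Baire property D cannot be
      countable.
  (3) A separable regular T1 sigma-space has at most 2^aleph_0 points: each nonempty member A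
      of the n-th discrete family of the network receives a nonempty "trace" T n A, a subset
      of a fixed countable dense set, with different members getting different traces; a point
      is then determined by the set of pairs (n, d) with d in the trace of the member of the
      n-th family containing it.
  (4) Under CH an uncountable D has |D| >= 2^aleph_0 >= |X|, contradicting |D| < |X|.
*)

section \<open>Traces of discrete families on a dense set\<close>

lemma closure_of_open_Int_dense:
  assumes "openin X V" and "X closure_of D = topspace X"
  shows "X closure_of (V \<inter> D) = X closure_of V"
  using closure_of_openin_Int_closure_of[OF assms(1), of D] assms openin_subset[OF assms(1)]
  by (simp add: Int_absorb2)

lemma regular_discrete_family_separating_nbhd:
  assumes reg: "regular_space X" and df: "discrete_family X F"
    and sub: "\<forall>B\<in>F. B \<subseteq> topspace X" and AF: "A \<in> F" and aA: "a \<in> A"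
  shows "\<exists>V. openin X V \<and> a \<in> V \<and> (\<forall>B\<in>F. B \<noteq> A \<longrightarrow> X closure_of V \<inter> B = {})"
proof -
  have a: "a \<in> topspace X" using sub AF aA by blast
  then obtain U where U: "openin X U" "a \<in> U"
    and meets_one: "\<forall>B\<in>F. \<forall>B'\<in>F. B \<inter> U \<noteq> {} \<and> B' \<inter> U \<noteq> {} \<longrightarrow> B = B'"
    using df unfolding discrete_family_def by auto
  define C where "C = X closure_of \<Union>(F - {A})"
  have "U \<inter> \<Union>(F - {A}) = {}"
    using meets_one AF aA U(2) by blast
  hence "a \<notin> C"
    using openin_Int_closure_of_eq_empty[OF U(1)] U(2) unfolding C_def by blast
  then obtain V W where VW: "openin X V" "openin X W" "a \<in> V" "C \<subseteq> W" "disjnt V W"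
    using reg a unfolding regular_space_def C_def by (metis DiffI closedin_closure_of)
  have "X closure_of V \<subseteq> topspace X - W"
    using openin_subset[OF VW(1)] VW(2,5)
    by (intro closure_of_minimal) (auto simp: disjnt_def)
  moreover have "\<Union>(F - {A}) \<subseteq> C"
    unfolding C_def by (rule closure_of_subset) (use sub in blast)
  ultimately show ?thesis using VW(1,3,4) by blast
qed

lemma discrete_family_dense_traces:
  assumes reg: "regular_space X" and dense: "X closure_of D = topspace X"
    and df: "discrete_family X F" and sub: "\<forall>B\<in>F. B \<subseteq> topspace X"
  shows "\<exists>T. \<forall>A\<in>F. A \<noteq> {} \<longrightarrow> T A \<subseteq> D \<and> T A \<noteq> {} \<and>
                (\<forall>B\<in>F. B \<noteq> {} \<and> B \<noteq> A \<longrightarrow> T B \<noteq> T A)"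
proof -
  define good where "good A V \<longleftrightarrow> openin X V \<and> V \<inter> A \<noteq> {} \<and>
      (\<forall>B\<in>F. B \<noteq> A \<longrightarrow> X closure_of V \<inter> B = {})" for A V
  have "\<exists>V. good A V" if AF: "A \<in> F" and nonempty: "A \<noteq> {}" for A
  proof -
    obtain a where a: "a \<in> A" using nonempty by blast
    then obtain V where "openin X V" "a \<in> V" "\<forall>B\<in>F. B \<noteq> A \<longrightarrow> X closure_of V \<inter> B = {}"
      using regular_discrete_family_separating_nbhd[OF reg df sub AF] by blast
    thus ?thesis using a unfolding good_def by blast
  qed
  then obtain V where V: "\<And>A. A \<in> F \<Longrightarrow> A \<noteq> {} \<Longrightarrow> good A (V A)"
    by metis
  have closure_trace: "X closure_of (V A \<inter> D) = X closure_of V A" if "A \<in> F" "A \<noteq> {}" for A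
    using closure_of_open_Int_dense[OF _ dense] V[OF that] unfolding good_def by blast
  have meets: "V A \<inter> A \<subseteq> X closure_of (V A \<inter> D)" if "A \<in> F" "A \<noteq> {}" for A
  proof -
    have "V A \<subseteq> X closure_of V A"
      using V[OF that] closure_of_subset openin_subset unfolding good_def by metis
    thus ?thesis using closure_trace[OF that] by blast
  qed
  have "V A \<inter> D \<noteq> {}" if "A \<in> F" "A \<noteq> {}" for A
    using meets[OF that] V[OF that] unfolding good_def by auto
  moreover have "V B \<inter> D \<noteq> V A \<inter> D"
    if "A \<in> F" "A \<noteq> {}" "B \<in> F" "B \<noteq> {}" "B \<noteq> A" for A B
  proof
    assume "V B \<inter> D = V A \<inter> D"
    hence "V B \<inter> B \<subseteq> X closure_of V A"
      using meets[OF that(3,4)] closure_trace[OF that(1,2)] by simp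
    moreover have "X closure_of V A \<inter> B = {}" "V B \<inter> B \<noteq> {}"
      using V[OF that(1,2)] V[OF that(3,4)] that(3,5) unfolding good_def by auto
    ultimately show False by blast
  qed
  ultimately show ?thesis by (intro exI[of _ "\<lambda>A. V A \<inter> D"]) blast
qed

section \<open>Cardinality of separable regular sigma-spaces\<close>

lemma discrete_family_unique_member:
  assumes "discrete_family X F" "x \<in> topspace X" "A \<in> F" "B \<in> F" "x \<in> A" "x \<in> B"
  shows "A = B"
  using assms unfolding discrete_family_def by blast

lemma sigma_discrete_network_coding_inj:
  assumes t1: "t1_space X" and net: "network X (\<Union>n. F n)"
    and df: "\<forall>n. discrete_family X (F n)"
    and T: "\<And>n A. A \<in> F n \<Longrightarrow> A \<noteq> {} \<Longrightarrow> T n A \<noteq> {} \<and>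
                   (\<forall>B\<in>F n. B \<noteq> {} \<and> B \<noteq> A \<longrightarrow> T n B \<noteq> T n A)"
  shows "inj_on (\<lambda>x. {(n, d). \<exists>A\<in>F n. x \<in> A \<and> d \<in> T n A}) (topspace X)"
    (is "inj_on ?code _")
proof (rule inj_onI, rule ccontr)
  fix x y assume x: "x \<in> topspace X" and y: "y \<in> topspace X"
    and same: "?code x = ?code y" and "x \<noteq> y"
  have slice: "{d. (n, d) \<in> ?code z} = T n A"
    if z: "z \<in> topspace X" and A: "A \<in> F n" "z \<in> A" for z n A
  proof -
    have uniq: "B = A" if "B \<in> F n" "z \<in> B" for B
      by (rule discrete_family_unique_member[OF df[rule_format] z that(1) A(1) that(2) A(2)])
    have "(\<exists>B\<in>F n. z \<in> B \<and> d \<in> T n B) \<longleftrightarrow> d \<in> T n A" for d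
      using uniq A by blast
    thus ?thesis by simp
  qed
  have "openin X (topspace X - {y})"
    using t1 by (simp add: t1_space_openin_delete_alt)
  then obtain N where "N \<in> (\<Union>n. F n)" "x \<in> N" "N \<subseteq> topspace X - {y}"
    using net x \<open>x \<noteq> y\<close> unfolding network_def by blast
  then obtain n where N: "N \<in> F n" "x \<in> N" "y \<notin> N" by blast
  have code_y: "{d. (n, d) \<in> ?code y} = T n N"
    using slice[OF x N(1,2)] same by simp
  show False
  proof (cases "\<exists>B\<in>F n. y \<in> B")
    case True
    then obtain B where B: "B \<in> F n" "y \<in> B" by blast
    have "T n B \<noteq> T n N"
      using T[OF N(1)] B N by blast
    thus False using slice[OF y B] code_y by simp
  next
    case False
    hence "T n N = {}" using code_y by auto
    thus False using T[OF N(1)] N(2) by blast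
  qed
qed

lemma inj_into_Pow_countable_card_le:
  assumes inj: "inj_on f S" and into: "\<forall>x\<in>S. f x \<subseteq> C" and "countable C"
  shows "|S| \<le>o |UNIV :: nat set set|"
proof -
  have enum: "inj_on (to_nat_on C) C"
    using \<open>countable C\<close> by (rule inj_on_to_nat_on)
  have "inj_on (\<lambda>x. to_nat_on C ` f x) S" (is "inj_on ?g S")
  proof (rule inj_onI)
    fix x y assume "x \<in> S" "y \<in> S" "to_nat_on C ` f x = to_nat_on C ` f y"
    hence "f x = f y" using inj_on_image_eq_iff[OF enum] into by blast
    with inj show "x = y" using \<open>x \<in> S\<close> \<open>y \<in> S\<close> by (rule inj_onD)
  qed
  hence "\<exists>g. inj_on g S \<and> g ` S \<subseteq> (UNIV :: nat set set)"
    by (intro exI[of _ ?g]) simp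
  thus ?thesis by (simp only: card_of_ordLeq)
qed

lemma separable_sigma_space_card_le_continuum:
  assumes sep: "separable_space X" and t1: "t1_space X" and reg: "regular_space X"
    and sig: "sigma_space X"
  shows "|topspace X| \<le>o |UNIV :: nat set set|"
proof -
  obtain D where D: "countable D" "X closure_of D = topspace X"
    using sep unfolding separable_space_def by blast
  obtain F :: "nat \<Rightarrow> 'a set set" where net: "network X (\<Union>n. F n)"
    and df: "\<forall>n. discrete_family X (F n)"
    using sig unfolding sigma_space_def sigma_discrete_def by blast
  have sub: "\<forall>B\<in>F n. B \<subseteq> topspace X" for n
    using net unfolding network_def by blast
  have "\<forall>n. \<exists>T. \<forall>A\<in>F n. A \<noteq> {} \<longrightarrow> T A \<subseteq> D \<and> T A \<noteq> {} \<and>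
                     (\<forall>B\<in>F n. B \<noteq> {} \<and> B \<noteq> A \<longrightarrow> T B \<noteq> T A)"
    using discrete_family_dense_traces[OF reg D(2) df[rule_format] sub] by blast
  then obtain T where T: "\<forall>n. \<forall>A\<in>F n. A \<noteq> {} \<longrightarrow> T n A \<subseteq> D \<and> T n A \<noteq> {} \<and>
                             (\<forall>B\<in>F n. B \<noteq> {} \<and> B \<noteq> A \<longrightarrow> T n B \<noteq> T n A)"
    by (rule choice[THEN exE])
  have "inj_on (\<lambda>x. {(n, d). \<exists>A\<in>F n. x \<in> A \<and> d \<in> T n A}) (topspace X)"
    by (rule sigma_discrete_network_coding_inj[OF t1 net df]) (use T in blast)
  moreover have "\<forall>x\<in>topspace X. {(n, d). \<exists>A\<in>F n. x \<in> A \<and> d \<in> T n A} \<subseteq> UNIV \<times> D"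
  proof (intro ballI subsetI)
    fix x p assume "p \<in> {(n, d). \<exists>A\<in>F n. x \<in> A \<and> d \<in> T n A}"
    then obtain n d A where "p = (n, d)" "A \<in> F n" "x \<in> A" "d \<in> T n A" by blast
    thus "p \<in> UNIV \<times> D" using T by blast
  qed
  moreover have "countable ((UNIV :: nat set) \<times> D)"
    using D(1) by simp
  ultimately show ?thesis
    by (rule inj_into_Pow_countable_card_le)
qed

section \<open>Discrete subspaces and the Baire property\<close>

text \<open>If dis(X) < Delta(X) then X has no isolated points, since an open singleton would
  have fewer elements than the (nonempty) cover by discrete subspaces.\<close>
lemma dis_less_Delta_no_isolated_points:
  assumes "dis_less_Delta X"
  shows "\<not> openin X {x}"
proof
  assume open_x: "openin X {x}"
  obtain \<D> where cover: "\<Union>\<D> = topspace X" and nonempty: "topspace X \<noteq> {}"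
    and less: "\<forall>U. openin X U \<and> U \<noteq> {} \<longrightarrow> |\<D>| <o |U|"
    using assms unfolding dis_less_Delta_def by blast
  have "\<D> \<noteq> {}" using cover nonempty by blast
  hence "|{x}| \<le>o |\<D>|" by (rule card_of_singl_ordLeq)
  thus False using less open_x not_ordLess_ordLeq by blast
qed

text \<open>In a T1 space without isolated points every discrete subspace is nowhere dense: an
  open set inside its closure would contain one of its points as an isolated point.\<close>
lemma discrete_subspace_nowhere_dense:
  assumes t1: "t1_space X" and disc: "discrete_subspace X D"
    and no_isolated: "\<And>x. \<not> openin X {x}"
  shows "X interior_of (X closure_of D) = {}"
proof (rule ccontr)
  define U where "U = X interior_of (X closure_of D)"
  assume "X interior_of (X closure_of D) \<noteq> {}"
  hence "U \<noteq> {}" unfolding U_def .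
  have U: "openin X U" "U \<subseteq> X closure_of D"
    unfolding U_def by (simp_all add: interior_of_subset)
  then obtain d where d: "d \<in> D" "d \<in> U"
    using \<open>U \<noteq> {}\<close> openin_Int_closure_of_eq_empty[OF U(1), of D] by blast
  have "openin (subtopology X D) {d}"
    using disc d(1) unfolding discrete_subspace_def by simp
  then obtain V where V: "openin X V" "{d} = V \<inter> D"
    by (auto simp: openin_subtopology)
  define W where "W = U \<inter> V - {d}"
  have "openin X W"
    unfolding W_def using t1 U(1) V(1) by (simp add: openin_Int t1_space_openin_delete_alt)
  moreover have "W \<inter> D = {}" using V(2) unfolding W_def by blast
  ultimately have "W \<inter> X closure_of D = {}"
    by (simp add: openin_Int_closure_of_eq_empty)
  moreover have "W \<subseteq> X closure_of D" using U(2) unfolding W_def by blast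
  ultimately have "W = {}" by blast
  hence "U \<inter> V = {d}" using d V(2) unfolding W_def by blast
  hence "openin X {d}" using openin_Int[OF U(1) V(1)] by simp
  thus False using no_isolated by blast
qed

lemma Baire_space_countable_nowhere_dense_cover:
  assumes Baire: "Baire_space X" and "countable \<D>"
    and nowhere_dense: "\<forall>D\<in>\<D>. X interior_of (X closure_of D) = {}"
    and cover: "\<Union>\<D> = topspace X"
  shows "topspace X = {}"
proof -
  define \<U> where "\<U> = (\<lambda>D. topspace X - X closure_of D) ` \<D>"
  have "openin X U \<and> X closure_of U = topspace X" if U_in: "U \<in> \<U>" for U
  proof -
    obtain D where "D \<in> \<D>" and U: "U = topspace X - X closure_of D"
      using U_in unfolding \<U>_def by blast
    hence "X closure_of U = topspace X"
      using nowhere_dense by (simp add: closure_of_complement)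
    thus ?thesis unfolding U by (simp add: openin_diff)
  qed
  moreover have "countable \<U>" unfolding \<U>_def using \<open>countable \<D>\<close> by simp
  ultimately have dense: "X closure_of (topspace X \<inter> \<Inter>\<U>) = topspace X"
    using Baire unfolding Baire_space_def by blast
  have "topspace X \<inter> \<Inter>\<U> = {}"
  proof (intro equals0I)
    fix x assume x: "x \<in> topspace X \<inter> \<Inter>\<U>"
    then obtain D where "D \<in> \<D>" "x \<in> D" using cover by blast
    moreover have "D \<subseteq> topspace X" using \<open>D \<in> \<D>\<close> cover by blast
    ultimately have "x \<in> X closure_of D" and "x \<notin> X closure_of D"
      using closure_of_subset x unfolding \<U>_def by blast+
    thus False by blast
  qed
  thus ?thesis using dense by simp
qed

lemma CH_uncountable_card_ge_continuum:
  assumes "CH" and "\<not> countable S"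
  shows "|UNIV :: nat set set| \<le>o |S|"
proof -
  have "\<not> |S| \<le>o |UNIV :: nat set|"
    using assms(2) unfolding countable_def card_of_ordLeq[symmetric] by blast
  hence "|UNIV :: nat set| <o |S|"
    using not_ordLeq_iff_ordLess[OF card_of_Well_order card_of_Well_order] by blast
  hence "cardSuc |UNIV :: nat set| \<le>o |S|"
    by (rule cardSuc_least[OF card_of_Card_order card_of_Card_order])
  moreover have "|UNIV :: nat set set| =o cardSuc |UNIV :: nat set|"
    using assms(1) unfolding CH_def by simp
  ultimately show ?thesis using ordIso_ordLeq_trans by blast
qed

theorem mainTheorem12:
  assumes "CH"
  shows "\<not> (\<exists>X :: 'a topology. separable_space X \<and> Hausdorff_space X \<and> regular_space X
            \<and> Baire_space X \<and> sigma_space X \<and> dis_less_Delta X)"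
proof
  assume "\<exists>X :: 'a topology. separable_space X \<and> Hausdorff_space X \<and> regular_space X
            \<and> Baire_space X \<and> sigma_space X \<and> dis_less_Delta X"
  then obtain X :: "'a topology" where sep: "separable_space X" and t1: "t1_space X"
    and reg: "regular_space X" and Baire: "Baire_space X" and sig: "sigma_space X"
    and dl: "dis_less_Delta X"
    using Hausdorff_imp_t1_space by blast
  from dl obtain \<D> where nonempty: "topspace X \<noteq> {}" and disc: "\<forall>D\<in>\<D>. discrete_subspace X D"
    and cover: "\<Union>\<D> = topspace X" and less: "|\<D>| <o |topspace X|"
    unfolding dis_less_Delta_def by blast
  have "\<not> countable \<D>"
  proof
    assume "countable \<D>"
    moreover have "\<forall>D\<in>\<D>. X interior_of (X closure_of D) = {}"
      using discrete_subspace_nowhere_dense[OF t1] dis_less_Delta_no_isolated_points[OF dl] disc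
      by blast
    ultimately show False
      using Baire_space_countable_nowhere_dense_cover[OF Baire] cover nonempty by blast
  qed
  hence "|topspace X| \<le>o |\<D>|"
    using ordLeq_transitive[OF separable_sigma_space_card_le_continuum[OF sep t1 reg sig]
        CH_uncountable_card_ge_continuum[OF assms]] by blast
  thus False using less not_ordLess_ordLeq by blast
qed

end
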